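(* Let $\{\varphi_n\}_{n\ge1}$ be an orthonormal system on $[0,1]$ such that, uniformly in $x\in[0,1]$, $\int_0^x\varphi_n(u)\,du=O\!\left(\frac1n\right)$ as $n\to\infty$. Let $\{d_n\}$ be a sequence of real numbers with $d_n=O\!\left(\frac{\sqrt{n}}{\log^2(n+1)}\right)$. Then for every $a=\{a_n\}\in\ell_2$, $$B_n(d,a)\le \max_{x\in[0,1]}\left|\int_0^x\sum_{k=1}^n d_k a_k\log k\,\varphi_k(u)\,du\right|=O(1)\quad (n\to\infty),$$ where $B_n(d,a)=\max_{1\le i<n}\left|\int_0^{i/n}\sum_{k=1}^n d_k a_k\log k\,\varphi_k(x)\,dx\right|$.
   Context: An orthonormal system on $[0,1]$ is a sequence of functions orthonormal in $L_2(0,1)$. $\log$ denotes the logarithm (so $\log 1=0$). *)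

theory Defs
  imports "HOL-Analysis.Analysis" "HOL-Library.Landau_Symbols"
begin

definition orthonormal_system :: "(nat \<Rightarrow> real \<Rightarrow> real) \<Rightarrow> bool" where
  "orthonormal_system phi \<longleftrightarrow>
     (\<forall>n\<ge>1. phi n \<in> borel_measurable lborel \<and>
             set_integrable lborel {0..1} (\<lambda>x. (phi n x)\<^sup>2)) \<and>
     (\<forall>n\<ge>1. \<forall>m\<ge>1. (LINT x:{0..1}|lborel. phi n x * phi m x) = (if n = m then 1 else 0))"

definition Fint :: "(nat \<Rightarrow> real \<Rightarrow> real) \<Rightarrow> (nat \<Rightarrow> real) \<Rightarrow> (nat \<Rightarrow> real) \<Rightarrow> nat \<Rightarrow> real \<Rightarrow> real" where
  "Fint phi d a n x = (LINT u:{0..x}|lborel. (\<Sum>k=1..n. d k * a k * ln (real k) * phi k u))"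

definition Bn :: "(nat \<Rightarrow> real \<Rightarrow> real) \<Rightarrow> (nat \<Rightarrow> real) \<Rightarrow> (nat \<Rightarrow> real) \<Rightarrow> nat \<Rightarrow> real" where
  "Bn phi d a n = Max {\<bar>Fint phi d a n (real i / real n)\<bar> | i. 1 \<le> i \<and> i < n}"

end

theory Submission
  imports Defs
begin

text \<open>
  Write \<open>c\<^sub>k = d\<^sub>k a\<^sub>k log k\<close>. Splitting the integral of the finite sum, \<open>|F\<^sub>n(x)|\<close> is at most
  \<open>\<Sum>\<^sub>k |c\<^sub>k| w\<^sub>k\<close>, where \<open>w\<^sub>k\<close> bounds the primitive of \<open>\<phi>\<^sub>k\<close> on \<open>[0,1]\<close> uniformly; by hypothesis
  \<open>w\<^sub>k = O(1/k)\<close>. The growth condition on \<open>d\<close> gives \<open>|c\<^sub>k|/k = O(|a\<^sub>k| / (\<surd>k log(k+1)))\<close>,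
  and by AM-GM this is dominated by \<open>a\<^sub>k\<^sup>2 + 1/(k log\<^sup>2(k+1))\<close>, which is summable.
  Hence \<open>|F\<^sub>n(x)|\<close> is bounded independently of \<open>n\<close> and \<open>x\<close>; the bound on \<open>B\<^sub>n\<close> is immediate
  since every point \<open>i/n\<close> lies in \<open>[0,1]\<close>.
\<close>

lemma set_integrable_of_square_integrable:
  fixes f :: "'a \<Rightarrow> real"
  assumes "f \<in> borel_measurable M" "A \<in> sets M" "emeasure M A < \<infinity>"
    and "set_integrable M A (\<lambda>x. (f x)\<^sup>2)"
  shows "set_integrable M A f"
proof (rule set_integrable_bound)
  have "set_integrable M A (\<lambda>x. 1 :: real)"
    using assms(2,3) by (simp add: set_integrable_def)
  then show "set_integrable M A (\<lambda>x. 1 + (f x)\<^sup>2)"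
    using assms(4) by (rule set_integral_add(1))
  show "set_borel_measurable M A f"
    using assms(1,2) unfolding set_borel_measurable_def by measurable
  have "\<bar>y\<bar> \<le> 1 + y\<^sup>2" for y :: real
    using sum_squares_bound[of "\<bar>y\<bar>" 1] by simp
  then show "AE x in M. x \<in> A \<longrightarrow> norm (f x) \<le> norm (1 + (f x)\<^sup>2)"
    by simp
qed

lemma orthonormal_system_set_integrable:
  assumes "orthonormal_system phi" "k \<ge> 1" "x \<le> 1"
  shows "set_integrable lborel {0..x} (phi k)"
proof -
  have "phi k \<in> borel_measurable lborel" "set_integrable lborel {0..1} (\<lambda>x. (phi k x)\<^sup>2)"
    using assms(1,2) by (auto simp: orthonormal_system_def)
  then have "set_integrable lborel {0..1} (phi k)"
    by (intro set_integrable_of_square_integrable[where f = "phi k"]) simp_all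
  then show ?thesis
    by (rule set_integrable_subset) (use assms(3) in auto)
qed

lemma abs_set_integral_le_subset:
  fixes f :: "'a \<Rightarrow> real"
  assumes "set_integrable M B f" "A \<in> sets M" "A \<subseteq> B"
  shows "\<bar>LINT x:A|M. f x\<bar> \<le> (LINT x:B|M. \<bar>f x\<bar>)"
proof -
  have "\<bar>LINT x:A|M. f x\<bar> \<le> (LINT x:A|M. \<bar>f x\<bar>)"
    using set_integral_norm_bound[OF set_integrable_subset[OF assms]] by simp
  also have "\<dots> \<le> (LINT x:B|M. \<bar>f x\<bar>)"
    using set_integrable_abs[OF set_integrable_subset[OF assms]] set_integrable_abs[OF assms(1)] assms(3)
    unfolding set_integrable_def set_lebesgue_integral_def
    by (intro integral_mono) (auto simp: indicator_def)
  finally show ?thesis .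
qed

lemma set_integral_sum:
  fixes f :: "'i \<Rightarrow> 'a \<Rightarrow> real"
  assumes "\<And>k. k \<in> I \<Longrightarrow> set_integrable M A (f k)"
  shows "(LINT x:A|M. (\<Sum>k\<in>I. f k x)) = (\<Sum>k\<in>I. LINT x:A|M. f k x)"
  using assms unfolding set_lebesgue_integral_def set_integrable_def
  by (simp add: sum_distrib_left Bochner_Integration.integral_sum)

lemma orthonormal_system_primitive_bound:
  assumes "orthonormal_system phi"
    and "\<exists>C. \<forall>\<^sub>F n in sequentially. \<forall>x\<in>{0..1}. \<bar>LINT u:{0..x}|lborel. phi n u\<bar> \<le> C / real n"
  obtains w where "\<And>k. w k \<ge> 0"
    and "\<And>k x. k \<ge> 1 \<Longrightarrow> x \<in> {0..1} \<Longrightarrow> \<bar>LINT u:{0..x}|lborel. phi k u\<bar> \<le> w k"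
    and "w \<in> O(\<lambda>k. 1 / real k)"
proof -
  obtain C N where CN: "\<And>n x. n \<ge> N \<Longrightarrow> x \<in> {0..1} \<Longrightarrow> \<bar>LINT u:{0..x}|lborel. phi n u\<bar> \<le> C / real n"
    using assms(2) unfolding eventually_sequentially by blast
  define w where "w k = (if k < N then LINT u:{0..1}|lborel. \<bar>phi k u\<bar> else \<bar>C\<bar> / real k)" for k
  show thesis
  proof
    show "w k \<ge> 0" for k
      by (simp add: w_def set_lebesgue_integral_def)
    show "\<bar>LINT u:{0..x}|lborel. phi k u\<bar> \<le> w k" if "k \<ge> 1" "x \<in> {0..1}" for k x
    proof (cases "k < N")
      case True
      then show ?thesis
        using that orthonormal_system_set_integrable[OF assms(1) \<open>k \<ge> 1\<close>, of 1]
        by (auto simp: w_def intro: abs_set_integral_le_subset)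
    next
      case False
      then have "\<bar>LINT u:{0..x}|lborel. phi k u\<bar> \<le> C / real k"
        using CN that(2) by simp
      also have "\<dots> \<le> \<bar>C\<bar> / real k"
        by (simp add: divide_right_mono)
      finally show ?thesis
        using False by (simp add: w_def)
    qed
    show "w \<in> O(\<lambda>k. 1 / real k)"
      by (intro bigoI[where c = "\<bar>C\<bar>"]) (auto simp: w_def eventually_sequentially intro: exI[of _ N])
  qed
qed

lemma summable_inverse_mult_ln_squared: "summable (\<lambda>n. 1 / (real n * (ln (real n + 1))\<^sup>2))"
proof -
  let ?f = "\<lambda>n. 1 / (real n * (ln (real n + 1))\<^sup>2)"
  have "summable (\<lambda>n. 2 ^ n * ?f (2 ^ n))"
  proof (rule summable_comparison_test_ev)
    show "summable (\<lambda>n. 1 / (ln 2)\<^sup>2 * inverse (real n ^ 2))"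
      by (intro summable_mult inverse_power_summable) auto
    have "norm (2 ^ n * ?f (2 ^ n)) \<le> 1 / (ln 2)\<^sup>2 * inverse (real n ^ 2)" if "n \<ge> 1" for n :: nat
    proof -
      have "ln 2 * real n = ln (2 ^ n)"
        by (simp add: ln_realpow)
      also have "\<dots> \<le> ln (2 ^ n + 1)"
        by (intro ln_mono) auto
      finally have le: "(ln 2 * real n)\<^sup>2 \<le> (ln (2 ^ n + 1))\<^sup>2"
        using that by (intro power_mono) auto
      have pos: "0 < (ln 2 * real n)\<^sup>2"
        using that by simp
      have "1 / (ln (2 ^ n + 1))\<^sup>2 \<le> 1 / (ln 2 * real n)\<^sup>2"
        using le pos by (intro frac_le) simp_all
      then show ?thesis
        by (simp add: field_simps)
    qed
    then show "\<forall>\<^sub>F n in sequentially. norm (2 ^ n * ?f (2 ^ n)) \<le> 1 / (ln 2)\<^sup>2 * inverse (real n ^ 2)"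
      unfolding eventually_sequentially by blast
  qed
  moreover have "?f (Suc m) \<le> ?f m" if "0 < m" for m
  proof -
    have "(ln (real m + 1))\<^sup>2 \<le> (ln (real (Suc m) + 1))\<^sup>2"
      using that by (intro power_mono) auto
    then have "real m * (ln (real m + 1))\<^sup>2 \<le> real (Suc m) * (ln (real (Suc m) + 1))\<^sup>2"
      by (intro mult_mono) auto
    then show ?thesis
      using that by (intro divide_left_mono) auto
  qed
  ultimately show ?thesis
    using condensation_test[of ?f] by simp
qed

lemma summable_coefficients_over_n:
  fixes d a :: "nat \<Rightarrow> real"
  assumes "d \<in> O(\<lambda>n. sqrt (real n) / (ln (real n + 1))\<^sup>2)" and "summable (\<lambda>n. (a n)\<^sup>2)"
  shows "summable (\<lambda>k. \<bar>d k * a k * ln (real k)\<bar> / real k)"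
proof -
  obtain D N where D: "D > 0"
    and DN: "\<And>n. n \<ge> N \<Longrightarrow> \<bar>d n\<bar> \<le> D * (sqrt (real n) / (ln (real n + 1))\<^sup>2)"
    using assms(1) by (elim landau_o.bigE) (auto simp: eventually_sequentially)
  have "norm (\<bar>d k * a k * ln (real k)\<bar> / real k) \<le> D / 2 * ((a k)\<^sup>2 + 1 / (real k * (ln (real k + 1))\<^sup>2))"
    if "k \<ge> max 1 N" for k
  proof -
    define s L where "s = sqrt (real k)" and "L = ln (real k + 1)"
    have "s > 0" "L > 0" "s * s = real k" "0 \<le> ln (real k)" "ln (real k) \<le> L"
      using that by (auto simp: s_def L_def)
    have "\<bar>d k * a k * ln (real k)\<bar> / real k \<le> D * (s / L\<^sup>2) * \<bar>a k\<bar> * L / real k"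
      using D DN[of k] that \<open>0 \<le> ln (real k)\<close> \<open>ln (real k) \<le> L\<close> \<open>L > 0\<close>
      unfolding s_def L_def abs_mult
      by (intro divide_right_mono mult_mono) auto
    also have "\<dots> = D / 2 * (2 * \<bar>a k\<bar> * (1 / (s * L)))"
      using \<open>s > 0\<close> \<open>L > 0\<close> \<open>s * s = real k\<close>[symmetric] by (simp add: field_simps power2_eq_square)
    also have "\<dots> \<le> D / 2 * ((a k)\<^sup>2 + (1 / (s * L))\<^sup>2)"
      using D sum_squares_bound[of "\<bar>a k\<bar>" "1 / (s * L)"] by (intro mult_left_mono) auto
    also have "\<dots> = D / 2 * ((a k)\<^sup>2 + 1 / (real k * (ln (real k + 1))\<^sup>2))"
      using \<open>s * s = real k\<close>[symmetric] by (simp add: L_def power2_eq_square)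
    finally show ?thesis
      by simp
  qed
  then have "\<forall>\<^sub>F k in sequentially. norm (\<bar>d k * a k * ln (real k)\<bar> / real k)
      \<le> D / 2 * ((a k)\<^sup>2 + 1 / (real k * (ln (real k + 1))\<^sup>2))"
    unfolding eventually_sequentially by blast
  moreover have "summable (\<lambda>k. D / 2 * ((a k)\<^sup>2 + 1 / (real k * (ln (real k + 1))\<^sup>2)))"
    by (intro summable_mult summable_add assms(2) summable_inverse_mult_ln_squared)
  ultimately show ?thesis
    by (rule summable_comparison_test_ev)
qed

lemma Fint_eq_sum_primitives:
  assumes "orthonormal_system phi" "x \<le> 1"
  shows "Fint phi d a n x = (\<Sum>k=1..n. d k * a k * ln (real k) * (LINT u:{0..x}|lborel. phi k u))"
  unfolding Fint_def
  using orthonormal_system_set_integrable[OF assms(1) _ assms(2)]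
  by (subst set_integral_sum) auto

lemma abs_Fint_le_suminf:
  assumes "orthonormal_system phi"
    and w_bound: "\<And>k x. k \<ge> 1 \<Longrightarrow> x \<in> {0..1} \<Longrightarrow> \<bar>LINT u:{0..x}|lborel. phi k u\<bar> \<le> w k"
    and w_nonneg: "\<And>k. w k \<ge> 0"
    and summable: "summable (\<lambda>k. \<bar>d k * a k * ln (real k)\<bar> * w k)"
    and x: "x \<in> {0..1}"
  shows "\<bar>Fint phi d a n x\<bar> \<le> (\<Sum>k. \<bar>d k * a k * ln (real k)\<bar> * w k)"
proof -
  have "\<bar>Fint phi d a n x\<bar> \<le> (\<Sum>k=1..n. \<bar>d k * a k * ln (real k) * (LINT u:{0..x}|lborel. phi k u)\<bar>)"
    using Fint_eq_sum_primitives[OF assms(1)] x by simp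
  also have "\<dots> \<le> (\<Sum>k=1..n. \<bar>d k * a k * ln (real k)\<bar> * w k)"
    unfolding abs_mult[of "d _ * a _ * ln _"]
    using w_bound x by (intro sum_mono mult_left_mono) auto
  also have "\<dots> \<le> (\<Sum>k. \<bar>d k * a k * ln (real k)\<bar> * w k)"
    using summable w_nonneg by (intro sum_le_suminf) auto
  finally show ?thesis .
qed

lemma Bn_le_Sup_Fint:
  assumes "n \<ge> 2" and bdd: "bdd_above ((\<lambda>x. \<bar>Fint phi d a n x\<bar>) ` {0..1})"
  shows "Bn phi d a n \<le> (SUP x\<in>{0..1}. \<bar>Fint phi d a n x\<bar>)"
proof -
  have grid: "{\<bar>Fint phi d a n (real i / real n)\<bar> | i. 1 \<le> i \<and> i < n}
      = (\<lambda>i. \<bar>Fint phi d a n (real i / real n)\<bar>) ` {1..<n}"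
    by auto
  have "real i / real n \<in> {0..1}" if "i \<in> {1..<n}" for i
    using that by auto
  then show ?thesis
    unfolding Bn_def grid using assms(1)
    by (intro Max.boundedI) (auto intro: cSUP_upper[OF _ bdd])
qed

lemma SUP_abs_bigo_one:
  fixes F :: "nat \<Rightarrow> 'a \<Rightarrow> real"
  assumes "A \<noteq> {}" and bound: "\<And>n x. x \<in> A \<Longrightarrow> \<bar>F n x\<bar> \<le> S"
  shows "(\<lambda>n. SUP x\<in>A. \<bar>F n x\<bar>) \<in> O(\<lambda>_. 1)"
proof (intro bigoI[where c = S] always_eventually allI)
  fix n
  have "bdd_above ((\<lambda>x. \<bar>F n x\<bar>) ` A)"
    using bound by (intro bdd_aboveI2)
  moreover obtain x0 where "x0 \<in> A"
    using \<open>A \<noteq> {}\<close> by blast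
  ultimately have "0 \<le> (SUP x\<in>A. \<bar>F n x\<bar>)"
    using abs_ge_zero cSUP_upper order_trans by metis
  moreover have "(SUP x\<in>A. \<bar>F n x\<bar>) \<le> S"
    using assms by (intro cSUP_least) auto
  ultimately show "norm (SUP x\<in>A. \<bar>F n x\<bar>) \<le> S * norm (1 :: real)"
    by simp
qed

theorem theorem5:
  fixes phi :: "nat \<Rightarrow> real \<Rightarrow> real" and d a :: "nat \<Rightarrow> real"
  assumes "orthonormal_system phi"
    and "\<exists>C. \<forall>\<^sub>F n in sequentially. \<forall>x\<in>{0..1}.
            \<bar>LINT u:{0..x}|lborel. phi n u\<bar> \<le> C / real n"
    and "d \<in> O(\<lambda>n. sqrt (real n) / (ln (real n + 1))\<^sup>2)"
    and "summable (\<lambda>n. (a n)\<^sup>2)"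
  shows "(\<forall>n\<ge>2. Bn phi d a n \<le> (SUP x\<in>{0..1}. \<bar>Fint phi d a n x\<bar>))
         \<and> (\<lambda>n. SUP x\<in>{0..1}. \<bar>Fint phi d a n x\<bar>) \<in> O(\<lambda>_. 1)"
proof -
  obtain w where w_nonneg: "\<And>k. w k \<ge> 0"
    and w_bound: "\<And>k x. k \<ge> 1 \<Longrightarrow> x \<in> {0..1} \<Longrightarrow> \<bar>LINT u:{0..x}|lborel. phi k u\<bar> \<le> w k"
    and w_bigo: "w \<in> O(\<lambda>k. 1 / real k)"
    using orthonormal_system_primitive_bound[OF assms(1,2)] by blast
  define S where "S = (\<Sum>k. \<bar>d k * a k * ln (real k)\<bar> * w k)"
  have "summable (\<lambda>k. \<bar>d k * a k * ln (real k)\<bar> * w k)"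
  proof (rule summable_comparison_test_bigo)
    show "summable (\<lambda>k. norm (\<bar>d k * a k * ln (real k)\<bar> * (1 / real k)))"
      using summable_coefficients_over_n[OF assms(3,4)] by simp
    show "(\<lambda>k. \<bar>d k * a k * ln (real k)\<bar> * w k) \<in> O(\<lambda>k. \<bar>d k * a k * ln (real k)\<bar> * (1 / real k))"
      using w_bigo by (rule landau_o.big.mult_left)
  qed
  then have Fint_le: "\<bar>Fint phi d a n x\<bar> \<le> S" if "x \<in> {0..1}" for n x
    using abs_Fint_le_suminf[OF assms(1) w_bound w_nonneg _ that] unfolding S_def by blast
  then have "bdd_above ((\<lambda>x. \<bar>Fint phi d a n x\<bar>) ` {0..1})" for n
    by (intro bdd_aboveI2)
  then show ?thesis
    using Bn_le_Sup_Fint SUP_abs_bigo_one[of "{0..1::real}", OF _ Fint_le] by simp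
qed

end
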